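(* Let $I$ be a resident-minimal and hospital-complete instance and let $(P,X)$ be a prescription for $I$. Then $|\mathrm{res}\,P\setminus\mathrm{res}\,\mathrm{tent}(I)|\ge|\mathrm{tgs}(P,X)|$.
   Context: An instance $I$ consists of finite disjoint sets $R$ (residents) and $H$ (hospitals), a positive integer quota $q_h$ for each $h\in H$, for each $r\in R$ a preference list of $r$ (a sequence of distinct members of $H$, not necessarily all), and for each $h\in H$ a preference list of $h$ (a sequence of distinct members of $R$). A list is complete if it contains every member of the opposite side; an instance is hospital-complete if every hospital's list is complete. A match is a pair $(r,h)\in R\times H$. For a set $M$ of matches, $\mathrm{res}_h M=\{r:(r,h)\in M\}$, $\mathrm{res}\,M=\{r:(r,h)\in M\text{ for some }h\}$. An event is $(r,h)^+$ (proposal) or $(r,h)^-$ (rejection). For an event sequence $\sigma$, $\mathrm{prop}(\sigma)$, $\mathrm{rej}(\sigma)$ are the sets of matches proposed/rejected in $\sigma$ and $\mathrm{tent}(\sigma)=\mathrm{prop}(\sigma)\setminus\mathrm{rej}(\sigma)$. A match $(r,h)\in M$ is ousted from $M$ in $I$ if the list of $h$ in $I$ contains at least $q_h$ residents of $\mathrm{res}_h M$ and either $r$ is not on it or $r$ is preceded on it by at least $q_h$ residents of $\mathrm{res}_h M$. $I$-feasible sequences: the empty sequence is $I$-feasible; if $\sigma$ is $I$-feasible then $\sigma+(r,h)^+$ is $I$-feasible if $r\notin\mathrm{res}\,\mathrm{tent}(\sigma)$, $(r,h)\notin\mathrm{prop}(\sigma)$, $h$ is on the list of $r$ in $I$ and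 $(r,h')\in\mathrm{rej}(\sigma)$ for every $h'$ preceding $h$ on it; and $\sigma+(r,h)^-$ is $I$-feasible if $(r,h)$ is ousted from $\mathrm{prop}(\sigma)$ in $I$ and $(r,h)\notin\mathrm{rej}(\sigma)$. All maximal $I$-feasible sequences contain the same events; $\mathrm{prop}(I),\mathrm{tent}(I)$ denote $\mathrm{prop}(\sigma),\mathrm{tent}(\sigma)$ for any maximal $I$-feasible $\sigma$. $I$ is resident-minimal if $\mathrm{prop}(I)$ equals the set of matches $(r,h)$ with $h$ on the list of $r$ in $I$. For a resident-minimal and hospital-complete instance $I$, a prescription for $I$ is a pair $(P,X)$ of sets of matches such that: (P1) $P\cap\mathrm{prop}(I)=\emptyset$; (P2) for each $r\in R$ there is at most one $h$ with $(r,h)\in P$; (P3) $X\subseteq\mathrm{tent}(I)$; (P4) $\mathrm{res}\,P\cap\mathrm{res}\,\mathrm{tent}(I)\subseteq\mathrm{res}\,X$; (P5) for each $h\in H$, $|\mathrm{res}_h(P\cup(\mathrm{tent}(I)\setminus X))|\le q_h$, with equality if $\mathrm{res}_h X\neq\emptyset$; (P6) for each $h\in H$, every member of $\mathrm{res}_h(P\cup(\mathrm{tent}(I)\setminus X))$ precedes all members of $\mathrm{res}_h X$ in the list of $h$ in $I$. Its target set is $\mathrm{tgs}(P,X)=\{(r,h)\in X: r\notin\mathrm{res}\,P\}$. *)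

theory Defs
  imports Main
begin

record ('r, 'h) hr_instance =
  Res   :: "'r set"
  Hosp  :: "'h set"
  quota :: "'h \<Rightarrow> nat"
  rpref :: "'r \<Rightarrow> 'h list"
  hpref :: "'h \<Rightarrow> 'r list"

definition wf_instance :: "('r, 'h) hr_instance \<Rightarrow> bool" where
  "wf_instance I \<longleftrightarrow> finite (Res I) \<and> finite (Hosp I)
     \<and> (\<forall>h \<in> Hosp I. quota I h > 0)
     \<and> (\<forall>r \<in> Res I. distinct (rpref I r) \<and> set (rpref I r) \<subseteq> Hosp I)
     \<and> (\<forall>h \<in> Hosp I. distinct (hpref I h) \<and> set (hpref I h) \<subseteq> Res I)"

definition precedes :: "'a list \<Rightarrow> 'a \<Rightarrow> 'a \<Rightarrow> bool" where
  "precedes xs a b \<longleftrightarrow> (\<exists>i j. i < j \<and> j < length xs \<and> xs ! i = a \<and> xs ! j = b)"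

definition res_h :: "('r \<times> 'h) set \<Rightarrow> 'h \<Rightarrow> 'r set" where
  "res_h M h = {r. (r, h) \<in> M}"

definition res :: "('r \<times> 'h) set \<Rightarrow> 'r set" where
  "res M = {r. \<exists>h. (r, h) \<in> M}"

datatype ('r, 'h) event = Propose 'r 'h | Reject 'r 'h

definition propset :: "('r, 'h) event list \<Rightarrow> ('r \<times> 'h) set" where
  "propset \<sigma> = {(r, h). Propose r h \<in> set \<sigma>}"

definition rejset :: "('r, 'h) event list \<Rightarrow> ('r \<times> 'h) set" where
  "rejset \<sigma> = {(r, h). Reject r h \<in> set \<sigma>}"

definition tentset :: "('r, 'h) event list \<Rightarrow> ('r \<times> 'h) set" where
  "tentset \<sigma> = propset \<sigma> - rejset \<sigma>"

definition ousted :: "('r, 'h) hr_instance \<Rightarrow> ('r \<times> 'h) set \<Rightarrow> 'r \<Rightarrow> 'h \<Rightarrow> bool" where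
  "ousted I M r h \<longleftrightarrow> (r, h) \<in> M
     \<and> card {r' \<in> set (hpref I h). r' \<in> res_h M h} \<ge> quota I h
     \<and> (r \<notin> set (hpref I h)
        \<or> card {r' \<in> res_h M h. precedes (hpref I h) r' r} \<ge> quota I h)"

inductive feasible :: "('r, 'h) hr_instance \<Rightarrow> ('r, 'h) event list \<Rightarrow> bool" for I where
  feas_Nil: "feasible I []"
| feas_Prop: "\<lbrakk> feasible I \<sigma>; r \<in> Res I; r \<notin> res (tentset \<sigma>); (r, h) \<notin> propset \<sigma>;
     h \<in> set (rpref I r);
     \<forall>h'. precedes (rpref I r) h' h \<longrightarrow> (r, h') \<in> rejset \<sigma> \<rbrakk>
   \<Longrightarrow> feasible I (\<sigma> @ [Propose r h])"
| feas_Rej: "\<lbrakk> feasible I \<sigma>; ousted I (propset \<sigma>) r h; (r, h) \<notin> rejset \<sigma> \<rbrakk>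
   \<Longrightarrow> feasible I (\<sigma> @ [Reject r h])"

definition maximal_feasible :: "('r, 'h) hr_instance \<Rightarrow> ('r, 'h) event list \<Rightarrow> bool" where
  "maximal_feasible I \<sigma> \<longleftrightarrow> feasible I \<sigma> \<and> (\<nexists>e. feasible I (\<sigma> @ [e]))"

text \<open>prop(I), tent(I): taken from any maximal feasible sequence
  (all of them contain the same events).\<close>
definition propI :: "('r, 'h) hr_instance \<Rightarrow> ('r \<times> 'h) set" where
  "propI I = propset (SOME \<sigma>. maximal_feasible I \<sigma>)"

definition tentI :: "('r, 'h) hr_instance \<Rightarrow> ('r \<times> 'h) set" where
  "tentI I = tentset (SOME \<sigma>. maximal_feasible I \<sigma>)"

definition resident_minimal :: "('r, 'h) hr_instance \<Rightarrow> bool" where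
  "resident_minimal I \<longleftrightarrow> propI I = {(r, h). r \<in> Res I \<and> h \<in> set (rpref I r)}"

definition hospital_complete :: "('r, 'h) hr_instance \<Rightarrow> bool" where
  "hospital_complete I \<longleftrightarrow> (\<forall>h \<in> Hosp I. set (hpref I h) = Res I)"

definition prescription :: "('r, 'h) hr_instance \<Rightarrow> ('r \<times> 'h) set \<Rightarrow> ('r \<times> 'h) set \<Rightarrow> bool" where
  "prescription I P X \<longleftrightarrow>
     P \<subseteq> Res I \<times> Hosp I \<and> X \<subseteq> Res I \<times> Hosp I
   \<and> P \<inter> propI I = {}
   \<and> (\<forall>r h h'. (r, h) \<in> P \<and> (r, h') \<in> P \<longrightarrow> h = h')
   \<and> X \<subseteq> tentI I
   \<and> res P \<inter> res (tentI I) \<subseteq> res X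
   \<and> (\<forall>h \<in> Hosp I. card (res_h (P \<union> (tentI I - X)) h) \<le> quota I h
        \<and> (res_h X h \<noteq> {} \<longrightarrow> card (res_h (P \<union> (tentI I - X)) h) = quota I h))
   \<and> (\<forall>h \<in> Hosp I. \<forall>a \<in> res_h (P \<union> (tentI I - X)) h. \<forall>b \<in> res_h X h.
        precedes (hpref I h) a b)"

definition tgs :: "('r \<times> 'h) set \<Rightarrow> ('r \<times> 'h) set \<Rightarrow> ('r \<times> 'h) set" where
  "tgs P X = {(r, h) \<in> X. r \<notin> res P}"

end

theory Submission
  imports Defs
begin

text \<open>Let \<open>\<sigma>\<close> be a maximal feasible sequence and \<open>T = tent(I)\<close> its tentative matches.
  Maximality forces every hospital to hold at most its quota in \<open>T\<close>: otherwise its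
  worst-ranked tentative resident is ousted and could still be rejected. For a
  hospital \<open>h\<close> with \<open>res\<^sub>h X \<noteq> {}\<close>, (P5) fills \<open>h\<close> to its quota with \<open>P\<close> and \<open>T - X\<close>,
  so \<open>|res\<^sub>h X| \<le> |res\<^sub>h P|\<close>; summing over hospitals gives \<open>|X| \<le> |P|\<close>. Both \<open>X \<subseteq> T\<close>
  and \<open>P\<close> assign at most one hospital to a resident, so \<open>|res X| \<le> |res P|\<close>, and
  by (P4) the residents of \<open>P\<close> inside \<open>res T\<close> are exactly those in \<open>res X\<close>.
  Removing this common part from both sides leaves the claim.\<close>

lemma res_eq_Domain: "res M = Domain M"
  by (auto simp: res_def)

lemma card_res_single_valued:
  assumes "single_valued M"
  shows "card (res M) = card M"
proof -
  have "inj_on fst M"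
    using assms by (auto simp: inj_on_def single_valued_def)
  then show ?thesis
    by (simp add: res_eq_Domain Domain_fst card_image)
qed

lemma card_tgs:
  assumes "single_valued X"
  shows "card (tgs P X) = card (res X - res P)"
proof -
  have "single_valued (tgs P X)"
    using assms by (auto simp: tgs_def intro: single_valued_subset)
  moreover have "res (tgs P X) = res X - res P"
    by (auto simp: tgs_def res_def)
  ultimately show ?thesis
    by (metis card_res_single_valued)
qed

lemma card_eq_sum_card_res_h:
  assumes "M \<subseteq> A \<times> B" "finite B" "finite M"
  shows "card M = (\<Sum>h\<in>B. card (res_h M h))"
proof -
  have M: "M = (\<Union>h\<in>B. (\<lambda>r. (r, h)) ` res_h M h)"
    using assms(1) by (auto simp: res_h_def)
  have "finite (res_h M h)" for h
    using finite_imageI[OF assms(3), of fst] by (rule finite_subset[rotated]) (force simp: res_h_def)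
  then have "card M = (\<Sum>h\<in>B. card ((\<lambda>r. (r, h)) ` res_h M h))"
    by (subst M, intro card_UN_disjoint) (auto simp: assms(2))
  also have "\<dots> = (\<Sum>h\<in>B. card (res_h M h))"
    by (intro sum.cong) (auto simp: card_image inj_on_def)
  finally show ?thesis .
qed

lemma card_diff_le_card_diff:
  assumes "finite A" "finite B" "B \<subseteq> C" "A \<inter> C \<subseteq> B" "card B \<le> card A"
  shows "card (B - A) \<le> card (A - C)"
proof -
  have "B \<inter> A = A \<inter> C"
    using assms(3,4) by blast
  then have "card B = card (A \<inter> C) + card (B - A)"
    using card_Int_Diff[OF assms(2), of A] by simp
  then show ?thesis
    using card_Int_Diff[OF assms(1), of C] assms(5) by linarith
qed

lemma ex_last_in_list:
  assumes "S \<subseteq> set xs" "S \<noteq> {}"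
  obtains r where "r \<in> S" "\<And>r'. r' \<in> S \<Longrightarrow> r' \<noteq> r \<Longrightarrow> precedes xs r' r"
proof -
  define Is where "Is = {i. i < length xs \<and> xs ! i \<in> S}"
  obtain x where "x \<in> S"
    using assms(2) by blast
  then have "Is \<noteq> {}"
    using assms(1) by (force simp: Is_def in_set_conv_nth)
  moreover have "finite Is"
    by (simp add: Is_def)
  ultimately have m: "Max Is \<in> Is" "\<And>i. i \<in> Is \<Longrightarrow> i \<le> Max Is"
    by simp_all
  have "precedes xs r' (xs ! Max Is)" if "r' \<in> S" "r' \<noteq> xs ! Max Is" for r'
  proof -
    have "r' \<in> set xs"
      using that(1) assms(1) by blast
    then obtain i where "i < length xs" "xs ! i = r'"
      by (auto simp: in_set_conv_nth)
    then have "i \<in> Is" "i \<noteq> Max Is"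
      using that by (auto simp: Is_def)
    then have "i < Max Is"
      using m(2) by fastforce
    then show ?thesis
      using m(1) \<open>xs ! i = r'\<close> by (auto simp: precedes_def Is_def)
  qed
  moreover have "xs ! Max Is \<in> S"
    using m(1) by (simp add: Is_def)
  ultimately show thesis
    using that by blast
qed

lemma feasible_distinct: "feasible I \<sigma> \<Longrightarrow> distinct \<sigma>"
  by (induction rule: feasible.induct) (auto simp: propset_def rejset_def)

lemma feasible_propset:
  "feasible I \<sigma> \<Longrightarrow> (r, h) \<in> propset \<sigma> \<Longrightarrow> r \<in> Res I \<and> h \<in> set (rpref I r)"
  by (induction rule: feasible.induct) (auto simp: propset_def)

lemma feasible_single_valued_tentset: "feasible I \<sigma> \<Longrightarrow> single_valued (tentset \<sigma>)"
  by (induction rule: feasible.induct)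
    (auto simp: single_valued_def tentset_def propset_def rejset_def res_def)

definition instance_events :: "('r, 'h) hr_instance \<Rightarrow> ('r, 'h) event set" where
  "instance_events I = (\<lambda>(r, h). Propose r h) ` (Res I \<times> Hosp I)
                     \<union> (\<lambda>(r, h). Reject r h) ` (Res I \<times> Hosp I)"

lemma feasible_events_subset:
  assumes "wf_instance I" "feasible I \<sigma>"
  shows "set \<sigma> \<subseteq> instance_events I"
  using assms(2)
proof induction
  case (feas_Prop \<sigma> r h)
  then have "(r, h) \<in> Res I \<times> Hosp I"
    using assms(1) by (auto simp: wf_instance_def)
  then show ?case
    using feas_Prop.IH by (force simp: instance_events_def)
next
  case (feas_Rej \<sigma> r h)
  then have "r \<in> Res I" "h \<in> set (rpref I r)"
    using feasible_propset by (fastforce simp: ousted_def)+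
  then have "(r, h) \<in> Res I \<times> Hosp I"
    using assms(1) by (auto simp: wf_instance_def)
  then show ?case
    using feas_Rej.IH by (force simp: instance_events_def)
qed simp

lemma feasible_tentset_subset:
  assumes "wf_instance I" "feasible I \<sigma>"
  shows "tentset \<sigma> \<subseteq> Res I \<times> Hosp I"
  using assms feasible_propset by (fastforce simp: wf_instance_def tentset_def)

lemma maximal_feasible_exists:
  assumes "wf_instance I"
  shows "\<exists>\<sigma>. maximal_feasible I \<sigma>"
proof -
  have "finite (instance_events I)"
    using assms by (simp add: wf_instance_def instance_events_def)
  then have "length \<sigma> < Suc (card (instance_events I))" if "feasible I \<sigma>" for \<sigma>
    using card_mono[OF _ feasible_events_subset[OF assms that]]
    by (simp add: distinct_card[OF feasible_distinct[OF that], symmetric])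
  then obtain \<sigma> where "feasible I \<sigma>"
    and longest: "\<And>\<tau>. feasible I \<tau> \<Longrightarrow> length \<tau> \<le> length \<sigma>"
    using ex_has_greatest_nat[of "feasible I" "[]" length] feas_Nil by metis
  moreover have "\<not> feasible I (\<sigma> @ [e])" for e
    using longest[of "\<sigma> @ [e]"] by auto
  ultimately show ?thesis
    by (auto simp: maximal_feasible_def)
qed

lemma tentI_maximal_feasible:
  assumes "wf_instance I"
  obtains \<sigma> where "maximal_feasible I \<sigma>" "tentI I = tentset \<sigma>"
  using someI_ex[OF maximal_feasible_exists[OF assms]] by (auto simp: tentI_def)

lemma maximal_feasible_card_tentset_le_quota:
  assumes "hospital_complete I" "maximal_feasible I \<sigma>" "h \<in> Hosp I"
  shows "card (res_h (tentset \<sigma>) h) \<le> quota I h"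
proof (rule ccontr)
  define S where "S = res_h (tentset \<sigma>) h"
  define M where "M = res_h (propset \<sigma>) h"
  assume "\<not> ?thesis"
  then have over: "quota I h < card S"
    by (simp add: S_def)
  have feas: "feasible I \<sigma>"
    using assms(2) by (simp add: maximal_feasible_def)
  have "S \<subseteq> set (hpref I h)"
    using assms(1,3) feasible_propset[OF feas]
    by (auto simp: S_def res_h_def tentset_def hospital_complete_def)
  moreover have "S \<noteq> {}"
    using over by auto
  ultimately obtain r where rS: "r \<in> S"
    and last: "\<And>r'. r' \<in> S \<Longrightarrow> r' \<noteq> r \<Longrightarrow> precedes (hpref I h) r' r"
    using ex_last_in_list by metis
  have SM: "S \<subseteq> M"
    by (auto simp: S_def M_def res_h_def tentset_def)
  have "card S \<le> card {r' \<in> set (hpref I h). r' \<in> M}"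
    using \<open>S \<subseteq> set (hpref I h)\<close> SM by (intro card_mono) auto
  moreover have "card (S - {r}) \<le> card {r' \<in> M. precedes (hpref I h) r' r}"
    using SM last
    by (intro card_mono) (auto simp: precedes_def intro: finite_subset[of _ "set (hpref I h)"])
  moreover have "finite S"
    using \<open>S \<subseteq> set (hpref I h)\<close> finite_subset by blast
  moreover have "(r, h) \<in> propset \<sigma>"
    using rS SM by (auto simp: M_def res_h_def)
  ultimately have "ousted I (propset \<sigma>) r h"
    using over rS by (auto simp: ousted_def M_def)
  moreover have "(r, h) \<notin> rejset \<sigma>"
    using rS by (simp add: S_def res_h_def tentset_def)
  ultimately have "feasible I (\<sigma> @ [Reject r h])"
    by (rule feas_Rej[OF feas])
  then show False
    using assms(2) by (simp add: maximal_feasible_def)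
qed

lemma tentI_subset:
  assumes "wf_instance I"
  shows "tentI I \<subseteq> Res I \<times> Hosp I"
  using tentI_maximal_feasible[OF assms] feasible_tentset_subset[OF assms]
  by (metis maximal_feasible_def)

lemma single_valued_tentI:
  assumes "wf_instance I"
  shows "single_valued (tentI I)"
  using tentI_maximal_feasible[OF assms] feasible_single_valued_tentset
  by (metis maximal_feasible_def)

lemma card_res_h_tentI_le_quota:
  assumes "wf_instance I" "hospital_complete I" "h \<in> Hosp I"
  shows "card (res_h (tentI I) h) \<le> quota I h"
  using tentI_maximal_feasible[OF assms(1)]
    maximal_feasible_card_tentset_le_quota[OF assms(2) _ assms(3)]
  by metis

lemma prescription_card_res_h_le:
  assumes "prescription I P X" "h \<in> Hosp I" "finite (Res I)"
    and "tentI I \<subseteq> Res I \<times> Hosp I"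
    and quota: "card (res_h (tentI I) h) \<le> quota I h"
  shows "card (res_h X h) \<le> card (res_h P h)"
proof (cases "res_h X h = {}")
  case False
  let ?T = "tentI I"
  have fin: "finite (res_h M h)" if "M \<subseteq> Res I \<times> Hosp I" for M
    using that assms(3) by (auto simp: res_h_def intro: finite_subset)
  have sub: "?T \<subseteq> Res I \<times> Hosp I" "P \<subseteq> Res I \<times> Hosp I" "X \<subseteq> ?T"
    and "P \<inter> ?T = {}"
    using assms(1,4) by (auto simp: prescription_def tentI_def propI_def tentset_def)
  then have "res_h (P \<union> (?T - X)) h = res_h P h \<union> res_h (?T - X) h"
    and "res_h P h \<inter> res_h (?T - X) h = {}"
    and "res_h ?T h = res_h X h \<union> res_h (?T - X) h"
    and "res_h X h \<inter> res_h (?T - X) h = {}"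
    by (auto simp: res_h_def)
  moreover have "finite (res_h P h)" "finite (res_h X h)" "finite (res_h (?T - X) h)"
    using sub by (auto intro!: fin)
  moreover have "card (res_h (P \<union> (?T - X)) h) = quota I h"
    using assms(1,2) False by (simp add: prescription_def)
  ultimately have "card (res_h P h) + card (res_h (?T - X) h) = quota I h"
    and "card (res_h X h) + card (res_h (?T - X) h) = card (res_h ?T h)"
    by (simp_all add: card_Un_disjoint)
  then show ?thesis
    using quota by linarith
qed simp

lemma prescription_card_le:
  assumes "prescription I P X" "wf_instance I" "tentI I \<subseteq> Res I \<times> Hosp I"
    and "\<And>h. h \<in> Hosp I \<Longrightarrow> card (res_h (tentI I) h) \<le> quota I h"
  shows "card X \<le> card P"
proof -
  have fin: "finite (Res I)" "finite (Hosp I)"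
    using assms(2) by (simp_all add: wf_instance_def)
  have sub: "X \<subseteq> Res I \<times> Hosp I" "P \<subseteq> Res I \<times> Hosp I"
    using assms(1) by (simp_all add: prescription_def)
  then have "finite X" "finite P"
    using fin by (simp_all add: finite_subset)
  then have "card X = (\<Sum>h\<in>Hosp I. card (res_h X h))"
    and "card P = (\<Sum>h\<in>Hosp I. card (res_h P h))"
    using sub fin by (simp_all add: card_eq_sum_card_res_h)
  then show ?thesis
    using prescription_card_res_h_le[OF assms(1) _ fin(1) assms(3,4)] by (simp add: sum_mono)
qed

theorem proposition7:
  fixes I :: "('r, 'h) hr_instance" and P X :: "('r \<times> 'h) set"
  assumes "wf_instance I"
    and "resident_minimal I"
    and "hospital_complete I"
    and "prescription I P X"
  shows "card (res P - res (tentI I)) \<ge> card (tgs P X)"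
proof -
  have XT: "X \<subseteq> tentI I" and "single_valued P"
    using assms(4) by (auto simp: prescription_def single_valued_def)
  then have X: "single_valued X"
    using single_valued_tentI[OF assms(1)] single_valued_subset by blast
  have "card X \<le> card P"
    using prescription_card_le[OF assms(4,1) tentI_subset[OF assms(1)]]
      card_res_h_tentI_le_quota[OF assms(1,3)] by blast
  then have "card (res X) \<le> card (res P)"
    using X \<open>single_valued P\<close> by (simp add: card_res_single_valued)
  moreover have "finite (res P)" "finite (res X)"
    using assms(1,4) finite_subset[of P "Res I \<times> Hosp I"] finite_subset[of X "Res I \<times> Hosp I"]
    by (simp_all add: wf_instance_def prescription_def res_eq_Domain finite_Domain)
  moreover have "res P \<inter> res (tentI I) \<subseteq> res X" "res X \<subseteq> res (tentI I)"
    using assms(4) XT by (auto simp: prescription_def res_def)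
  ultimately have "card (res X - res P) \<le> card (res P - res (tentI I))"
    by (intro card_diff_le_card_diff)
  then show ?thesis
    using card_tgs[OF X] by simp
qed

end
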